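(* Let $q=q(h)$ be a function of $h$ with values in $[0,1]$, and let $\Sigma$ be a random fan chosen with respect to $T(h,1-q)$. Then: (1) If $q\prec 1/h^2$ or $1-q\prec 1/h^2$, then with high probability $X(\Sigma)$ is smooth. (2) If $q\succ 1/h^2$ and $1-q\succ 1/h^2$, then with high probability $X(\Sigma)$ is singular. (3) Moreover, for every integer $k>1$: if $1-q\succ 1/h$ and $q\succ 1/h^2$, then with high probability $X(\Sigma)$ has a singularity of index at least $k$, i.e. $\Sigma$ has a $2$-dimensional cone of singularity index at least $k$.
   Context: A ray is a half-line $\rho=\mathbb{R}_{\ge 0}v\subset\mathbb{R}^2$ with $v\in\mathbb{Z}^2\setminus\{0\}$; $u_\rho$ denotes the primitive lattice generator of $\rho$ (the nonzero lattice point on $\rho$ closest to $0$). On $\mathbb{Z}^2$ use the norm $|(x,y)|=\max\{|x|,|y|\}$, and write $|\rho|=|u_\rho|$. Given a finite set $S$ of rays, its completion is the fan $\Sigma$ with $\Sigma(1)=S$ that is maximal with respect to inclusion among all fans (collections of strongly convex rational polyhedral cones closed under faces and meeting in common faces) with set of rays $S$; concretely its $2$-dimensional cones are the cones spanned by pairs of angularly consecutive rays of $S$ whose angle is less than $\pi$. For $h\ge 1$ and $p\in[0,1]$, the distribution $T(h,p)$ on fans is obtained by including each ray $\rho$ with $|\rho|\le h$ independently with probability $p$ and taking the completion of the chosen set of rays. $X(\Sigma)$ denotes the normal toric surface of the fan $\Sigma$. The singularity index of a $2$-dimensional cone spanned by rays $\rho,\tau$ is $|\det(u_\rho,u_\tau)|$;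 $X(\Sigma)$ is smooth iff every $2$-dimensional cone of $\Sigma$ has index $1$, and "$X(\Sigma)$ has a singularity of index at least $k$" means some $2$-dimensional cone has index $\ge k$. For functions $f,g$ of $h$, $f\prec g$ means $\lim_{h\to\infty}f(h)/g(h)=0$, and $f\succ g$ means $g\prec f$. A property holds with high probability if its probability tends to $1$ as $h\to\infty$. *)

theory Defs
  imports "HOL-Probability.Probability"
begin

text \<open>A ray is represented by its primitive lattice generator u = (x,y) in Z^2 with gcd x y = 1.\<close>

definition primitive :: "int \<times> int \<Rightarrow> bool" where
  "primitive u \<longleftrightarrow> gcd (fst u) (snd u) = 1"

definition maxnorm :: "int \<times> int \<Rightarrow> int" where
  "maxnorm u = max \<bar>fst u\<bar> \<bar>snd u\<bar>"

definition rays_upto :: "nat \<Rightarrow> (int \<times> int) set" where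
  "rays_upto h = {u. primitive u \<and> maxnorm u \<le> int h}"

definition det2 :: "int \<times> int \<Rightarrow> int \<times> int \<Rightarrow> int" where
  "det2 u v = fst u * snd v - snd u * fst v"

text \<open>2-dimensional cones of the completion of a set S of rays: pairs (u,v) of
  angularly consecutive rays (v follows u counterclockwise, no ray of S strictly in
  between) whose angle is less than pi (i.e. det(u,v) > 0).\<close>
definition cone2 :: "(int \<times> int) set \<Rightarrow> int \<times> int \<Rightarrow> int \<times> int \<Rightarrow> bool" where
  "cone2 S u v \<longleftrightarrow> u \<in> S \<and> v \<in> S \<and> det2 u v > 0 \<and>
     \<not> (\<exists>w\<in>S. det2 u w > 0 \<and> det2 w v > 0)"

definition sing_index :: "int \<times> int \<Rightarrow> int \<times> int \<Rightarrow> int" where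
  "sing_index u v = \<bar>det2 u v\<bar>"

definition smooth_fan :: "(int \<times> int) set \<Rightarrow> bool" where
  "smooth_fan S \<longleftrightarrow> (\<forall>u v. cone2 S u v \<longrightarrow> sing_index u v = 1)"

definition has_sing_index_ge :: "(int \<times> int) set \<Rightarrow> nat \<Rightarrow> bool" where
  "has_sing_index_ge S k \<longleftrightarrow> (\<exists>u v. cone2 S u v \<and> sing_index u v \<ge> int k)"

text \<open>T(h,p): each ray of norm \<le> h is chosen independently with probability p; the fan is
  the completion of the chosen set, hence determined by the chosen ray set.\<close>
definition T :: "nat \<Rightarrow> real \<Rightarrow> (int \<times> int) set pmf" where
  "T h p = map_pmf (\<lambda>f. {u \<in> rays_upto h. f u})
              (Pi_pmf (rays_upto h) False (\<lambda>_. bernoulli_pmf p))"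

definition prec :: "(nat \<Rightarrow> real) \<Rightarrow> (nat \<Rightarrow> real) \<Rightarrow> bool" where
  "prec f g \<longleftrightarrow> (\<forall>\<^sub>F h in sequentially. g h \<noteq> 0) \<and>
                 ((\<lambda>h. f h / g h) \<longlongrightarrow> 0) sequentially"

definition succ :: "(nat \<Rightarrow> real) \<Rightarrow> (nat \<Rightarrow> real) \<Rightarrow> bool" where
  "succ f g \<longleftrightarrow> prec g f"

definition whp :: "(nat \<Rightarrow> real) \<Rightarrow> bool" where
  "whp P \<longleftrightarrow> (P \<longlongrightarrow> 1) sequentially"

end

theory Submission
  imports Defs
begin

text \<open>
  The fan of all rays of norm at most h is smooth: if the cone spanned by u and v had index
  d \<ge> 2, a unimodular partner w of u with 0 < det(w, v) < d would be a ray of norm at most h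
  strictly inside it. Since there are only O(h^2) rays, the random fan is therefore smooth with
  high probability when q h^2 \<rightarrow> 0 (all rays chosen) or (1 - q) h^2 \<rightarrow> 0 (no ray chosen).

  Singular cones come from pivots: rays w = (a, b) with 0 \<le> b < a \<le> h / M. A pivot has unimodular
  neighbours u, v of norm at most h whose first coordinates exceed h - a; the cone spanned by u
  and v has index at least 2M - 1, and w is the only ray of norm at most h inside it. The triples
  (u, w, v) of distinct pivots are disjoint and there are at least c h^2 pivots, so with p = 1 - q
  the probability that no pivot has u and v chosen but w omitted is at most exp(- c p^2 q h^2).
  This tends to 0 when p h \<rightarrow> \<infinity> and q h^2 \<rightarrow> \<infinity>. When only p h^2 \<rightarrow> \<infinity> is known and p is small,
  with high probability (1, 0) is omitted while some pivot and some mirrored pivot are chosen;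
  the two chosen rays closest to the positive x-axis then span a cone of index at least 2.
\<close>

section \<open>Unimodular cones\<close>

lemma det2_swap: "det2 v u = - det2 u v"
  by (simp add: det2_def algebra_simps)

lemma det2_cramer_fst: "det2 u w * fst z = det2 z w * fst u + det2 u z * fst w"
  by (simp add: det2_def algebra_simps)

lemma det2_cramer_snd: "det2 u w * snd z = det2 z w * snd u + det2 u z * snd w"
  by (simp add: det2_def algebra_simps)

lemma primitive_common_divisor:
  assumes "primitive z" "d dvd fst z" "d dvd snd z"
  shows "is_unit d"
  using assms unfolding primitive_def by (metis gcd_greatest)

lemma primitive_fst_eq_1_if_snd_eq_0:
  assumes "primitive z" "snd z = 0" "fst z > 0"
  shows "z = (1, 0)"
  using assms unfolding primitive_def by (simp add: prod_eq_iff)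

lemma primitive_if_det2_eq_1:
  assumes "det2 u w = 1"
  shows "primitive u" "primitive w"
proof -
  have "gcd (fst u) (snd u) dvd det2 u w" "gcd (fst w) (snd w) dvd det2 u w"
    unfolding det2_def by (simp_all add: dvd_diff)
  then show "primitive u" "primitive w"
    using assms unfolding primitive_def by simp_all
qed

lemma rays_upto_abs_le:
  assumes "z \<in> rays_upto h" shows "\<bar>fst z\<bar> \<le> int h" "\<bar>snd z\<bar> \<le> int h"
  using assms unfolding rays_upto_def maxnorm_def by auto

lemma rays_upto_subset_box: "rays_upto h \<subseteq> {-int h..int h} \<times> {-int h..int h}"
  unfolding rays_upto_def maxnorm_def by auto

lemma finite_rays_upto: "finite (rays_upto h)"
  using rays_upto_subset_box by (rule finite_subset) simp

lemma card_rays_upto_le: "card (rays_upto h) \<le> (2 * h + 1)^2"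
proof -
  have "card (rays_upto h) \<le> card ({-int h..int h} \<times> {-int h..int h})"
    using rays_upto_subset_box by (rule card_mono[rotated]) simp
  also have "\<dots> = (2 * h + 1)^2"
    by (simp add: card_cartesian_product power2_eq_square nat_add_distrib nat_mult_distrib)
  finally show ?thesis .
qed

lemma abs_le_of_weighted_sum:
  fixes d r x x1 x2 H :: int
  assumes "0 < r" "r < d" "\<bar>x1\<bar> \<le> H" "\<bar>x2\<bar> \<le> H" "d * x = r * x1 + x2"
  shows "\<bar>x\<bar> \<le> H"
proof -
  have "d * \<bar>x\<bar> = \<bar>r * x1 + x2\<bar>"
    using assms by (simp add: abs_mult flip: assms(5))
  also have "\<dots> \<le> r * \<bar>x1\<bar> + \<bar>x2\<bar>"
    using assms(1) by (simp add: abs_mult order.trans[OF abs_triangle_ineq])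
  also have "\<dots> \<le> (d - 1) * H + H"
    using assms by (intro add_mono mult_mono) auto
  finally have "d * \<bar>x\<bar> \<le> d * H" by (simp add: algebra_simps)
  then show ?thesis using assms by simp
qed

lemma unimodular_partner_between:
  assumes "primitive u" "primitive v" "det2 u v \<ge> 2"
  obtains w where "det2 u w = 1" "0 < det2 w v" "det2 w v < det2 u v"
proof -
  define d where "d = det2 u v"
  obtain s t where st: "s * fst u + t * snd u = 1"
    using bezout_int[of "fst u" "snd u"] assms(1) unfolding primitive_def by auto
  define r where "r = det2 (- t, s) v"
  \<comment> \<open>shift the Bezout partner (-t, s) along u so that det(w, v) becomes the residue of r mod d\<close>
  define w where "w = (- (r div d) * fst u - t, - (r div d) * snd u + s)"
  have duw: "det2 u w = 1" using st unfolding w_def det2_def by (simp add: algebra_simps)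
  have "det2 w v = r - (r div d) * d" unfolding w_def r_def d_def det2_def by (simp add: algebra_simps)
  then have dwv: "det2 w v = r mod d" by (simp add: minus_div_mult_eq_mod)
  have "det2 w v \<noteq> 0"
  proof
    assume "det2 w v = 0"
    then have "d dvd fst v" "d dvd snd v"
      using det2_cramer_fst[of u v w] det2_cramer_snd[of u v w] duw unfolding d_def
      by (simp_all add: dvd_def) (metis mult.commute)+
    then have "\<bar>d\<bar> = 1" using primitive_common_divisor[OF assms(2)] by simp
    then show False using assms(3) unfolding d_def by simp
  qed
  moreover have "0 \<le> r mod d" "r mod d < d" using assms(3) unfolding d_def by simp_all
  ultimately show ?thesis using that duw dwv unfolding d_def by simp
qed

lemma smooth_fan_rays_upto: "smooth_fan (rays_upto h)"
  unfolding smooth_fan_def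
proof (intro allI impI)
  fix u v assume cone: "cone2 (rays_upto h) u v"
  then have u: "u \<in> rays_upto h" and v: "v \<in> rays_upto h" and duv: "det2 u v > 0"
    and between: "\<not> (\<exists>w\<in>rays_upto h. det2 u w > 0 \<and> det2 w v > 0)"
    unfolding cone2_def by auto
  show "sing_index u v = 1"
  proof (rule ccontr)
    assume "sing_index u v \<noteq> 1"
    then have "det2 u v \<ge> 2" using duv unfolding sing_index_def by auto
    then obtain w where duw: "det2 u w = 1" and r: "0 < det2 w v" "det2 w v < det2 u v"
      using unimodular_partner_between u v unfolding rays_upto_def by blast
    have "det2 u v * fst w = det2 w v * fst u + fst v"
      using det2_cramer_fst[of u v w] duw by simp
    then have "\<bar>fst w\<bar> \<le> int h"
      by (rule abs_le_of_weighted_sum[OF r rays_upto_abs_le(1)[OF u] rays_upto_abs_le(1)[OF v]])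
    moreover have "det2 u v * snd w = det2 w v * snd u + snd v"
      using det2_cramer_snd[of u v w] duw by simp
    then have "\<bar>snd w\<bar> \<le> int h"
      by (rule abs_le_of_weighted_sum[OF r rays_upto_abs_le(2)[OF u] rays_upto_abs_le(2)[OF v]])
    ultimately have "w \<in> rays_upto h"
      using primitive_if_det2_eq_1(2)[OF duw] unfolding rays_upto_def maxnorm_def by simp
    then show False using between duw r by auto
  qed
qed

lemma det2_le_0_if_slope_le:
  assumes "fst u > 0" "fst v > 0"
    and "real_of_int (snd u) / real_of_int (fst u) \<le> real_of_int (snd v) / real_of_int (fst v)"
  shows "det2 v u \<le> 0"
proof -
  have "real_of_int (snd u * fst v) \<le> real_of_int (snd v * fst u)"
    using assms by (simp add: field_simps)
  then show ?thesis unfolding det2_def of_int_le_iff by (simp add: algebra_simps)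
qed

lemma rays_closest_to_x_axis:
  assumes "finite S" "v0 \<in> S" "fst v0 > 0" "snd v0 > 0" "u0 \<in> S" "fst u0 > 0" "snd u0 < 0"
  obtains u v where "u \<in> S" "fst u > 0" "snd u < 0" "v \<in> S" "fst v > 0" "snd v > 0"
    "\<And>z. z \<in> S \<Longrightarrow> fst z > 0 \<Longrightarrow> snd z > 0 \<Longrightarrow> det2 z v \<le> 0"
    "\<And>z. z \<in> S \<Longrightarrow> fst z > 0 \<Longrightarrow> snd z < 0 \<Longrightarrow> det2 u z \<le> 0"
proof -
  define A where "A = {z\<in>S. fst z > 0 \<and> snd z > 0}"
  define B where "B = {z\<in>S. fst z > 0 \<and> snd z < 0}"
  define slope where "slope = (\<lambda>z::int \<times> int. real_of_int (snd z) / real_of_int (fst z))"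
  have "v0 \<in> A" "u0 \<in> B" using assms unfolding A_def B_def by auto
  moreover have "finite A" "finite B" using assms(1) unfolding A_def B_def by auto
  ultimately have A: "finite A" "A \<noteq> {}" and B: "finite B" "B \<noteq> {}" by auto
  define v where "v = arg_min_on slope A"
  define u where "u = arg_min_on (\<lambda>z. - slope z) B"
  have "v \<in> A" "u \<in> B"
    unfolding v_def u_def by (rule arg_min_if_finite(1)[OF A], rule arg_min_if_finite(1)[OF B])
  moreover have "det2 z v \<le> 0" if "z \<in> A" for z
  proof -
    have "slope v \<le> slope z" unfolding v_def by (rule arg_min_least[OF A that])
    then show ?thesis using that \<open>v \<in> A\<close> unfolding A_def slope_def by (intro det2_le_0_if_slope_le) auto
  qed
  moreover have "det2 u z \<le> 0" if "z \<in> B" for z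
  proof -
    have "- slope u \<le> - slope z" unfolding u_def by (rule arg_min_least[OF B that])
    then show ?thesis using that \<open>u \<in> B\<close> unfolding B_def slope_def by (intro det2_le_0_if_slope_le) auto
  qed
  ultimately show ?thesis using that unfolding A_def B_def by blast
qed

lemma not_smooth_fan_if_rays_on_both_sides_of_x_axis:
  assumes "finite S" "\<forall>z\<in>S. primitive z" "(1, 0) \<notin> S"
    and "v0 \<in> S" "fst v0 > 0" "snd v0 > 0" and "u0 \<in> S" "fst u0 > 0" "snd u0 < 0"
  shows "\<not> smooth_fan S"
proof -
  obtain u v where u: "u \<in> S" "fst u > 0" "snd u < 0" and v: "v \<in> S" "fst v > 0" "snd v > 0"
    and v_min: "\<And>z. z \<in> S \<Longrightarrow> fst z > 0 \<Longrightarrow> snd z > 0 \<Longrightarrow> det2 z v \<le> 0"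
    and u_max: "\<And>z. z \<in> S \<Longrightarrow> fst z > 0 \<Longrightarrow> snd z < 0 \<Longrightarrow> det2 u z \<le> 0"
    using rays_closest_to_x_axis[OF assms(1,4-9)] by blast
  have "fst u * snd v > 0" "snd u * fst v < 0"
    using u v by (simp_all add: mult_pos_pos mult_neg_pos)
  then have duv: "det2 u v \<ge> 2" unfolding det2_def by linarith
  have "\<not> (\<exists>z\<in>S. det2 u z > 0 \<and> det2 z v > 0)"
  proof
    assume "\<exists>z\<in>S. det2 u z > 0 \<and> det2 z v > 0"
    then obtain z where z: "z \<in> S" "det2 u z > 0" "det2 z v > 0" by blast
    have "det2 u v * fst z = det2 z v * fst u + det2 u z * fst v" by (rule det2_cramer_fst)
    also have "\<dots> > 0" using z u v by (simp add: add_pos_pos)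
    finally have "fst z > 0" using duv by (simp add: zero_less_mult_iff)
    then show False
      using v_min[of z] u_max[of z] primitive_fst_eq_1_if_snd_eq_0[of z] z assms(2,3)
      by (cases "snd z" "0 :: int" rule: linorder_cases) auto
  qed
  then have "cone2 S u v" unfolding cone2_def using duv u v by auto
  moreover have "sing_index u v \<noteq> 1" unfolding sing_index_def using duv by auto
  ultimately show ?thesis unfolding smooth_fan_def by blast
qed

section \<open>Pivots\<close>

text \<open>The neighbours u and v of a pivot w are pivot_nbr h w 1 and pivot_nbr h w (-1), i.e.
  det(u, w) = 1 = det(w, v).\<close>

definition pivots :: "nat \<Rightarrow> int \<Rightarrow> (int \<times> int) set" where
  "pivots h M = {w \<in> rays_upto h. 1 \<le> fst w \<and> M * fst w \<le> int h \<and> 0 \<le> snd w \<and> snd w < fst w}"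

definition pivot_nbr :: "nat \<Rightarrow> int \<times> int \<Rightarrow> int \<Rightarrow> int \<times> int" where
  "pivot_nbr h w \<sigma> = (SOME x. x \<in> rays_upto h \<and> det2 x w = \<sigma> \<and> fst x > int h - fst w)"

lemma pivotsD:
  assumes "w \<in> pivots h M" "M \<ge> 4"
  shows "w \<in> rays_upto h" "1 \<le> fst w" "4 * fst w \<le> int h" "0 \<le> snd w" "snd w < fst w"
proof -
  have "4 * fst w \<le> M * fst w" "M * fst w \<le> int h"
    using assms unfolding pivots_def by (auto intro: mult_right_mono)
  then show "4 * fst w \<le> int h" by linarith
  show "w \<in> rays_upto h" "1 \<le> fst w" "0 \<le> snd w" "snd w < fst w"
    using assms(1) unfolding pivots_def by auto
qed

lemma not_pivot_if_fst_large:
  assumes "w \<in> pivots h M" "w' \<in> pivots h M" "M \<ge> 4" "fst x > int h - fst w"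
  shows "x \<noteq> w'"
  using pivotsD[OF assms(1,3)] pivotsD[OF assms(2,3)] assms(4) by auto

lemma snd_bounds_of_near_slope:
  fixes a b x y e :: int
  assumes "1 \<le> a" "0 \<le> b" "b < a" "1 \<le> x" "y * a = x * b + e" "\<bar>e\<bar> \<le> 1"
  shows "-1 \<le> y" "y \<le> x"
proof -
  show "-1 \<le> y"
  proof (rule ccontr)
    assume "\<not> -1 \<le> y"
    then have "y * a \<le> -2 * a" using assms(1) by (intro mult_right_mono) auto
    moreover have "x * b \<ge> 0" using assms by simp
    ultimately show False using assms by linarith
  qed
  show "y \<le> x"
  proof (rule ccontr)
    assume "\<not> y \<le> x"
    then have "y * a \<ge> (x + 1) * a" using assms(1) by (intro mult_right_mono) auto
    moreover have "x * b \<le> x * (a - 1)" using assms by (intro mult_left_mono) auto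
    ultimately show False using assms by (auto simp: algebra_simps)
  qed
qed

lemma pivot_nbr_exists:
  assumes "w \<in> pivots h M" "M \<ge> 4" "\<bar>\<sigma>\<bar> = 1"
  shows "\<exists>x. x \<in> rays_upto h \<and> det2 x w = \<sigma> \<and> fst x > int h - fst w"
proof -
  obtain a b where w: "w = (a, b)" by (cases w)
  note P = pivotsD[OF assms(1,2), unfolded w, simplified]
  obtain s t where st: "s * a + t * b = 1"
    using bezout_int[of a b] P(1) unfolding rays_upto_def primitive_def by auto
  \<comment> \<open>the solutions of det(x, w) = \<sigma> are (\<sigma> t + k a, k b - \<sigma> s); k is chosen to put
    fst x into (h - a, h]\<close>
  define k where "k = (int h - \<sigma> * t) div a"
  define x where "x = (\<sigma> * t + k * a, k * b - \<sigma> * s)"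
  have "fst x = int h - (int h - \<sigma> * t) mod a"
    unfolding x_def k_def by (simp add: minus_mod_eq_mult_div[symmetric] algebra_simps)
  then have x1: "int h - a < fst x" "fst x \<le> int h" using P(2) by (simp_all add: pos_mod_bound)
  have "det2 x w = \<sigma> * (s * a + t * b)" unfolding x_def w det2_def by (simp add: algebra_simps)
  then have dx: "det2 x w = \<sigma>" using st by simp
  have "snd x * a = fst x * b + (- \<sigma>)" using dx unfolding det2_def w by (simp add: algebra_simps)
  then have "-1 \<le> snd x" "snd x \<le> fst x"
    using snd_bounds_of_near_slope[of a b "fst x" "snd x" "- \<sigma>"] x1 P assms(3) by auto
  moreover have "primitive x"
    using dx assms(3) primitive_if_det2_eq_1(1)[of x w] primitive_if_det2_eq_1(2)[of w x] det2_swap[of x w]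
    by (auto simp: abs_if split: if_splits)
  ultimately have "x \<in> rays_upto h" using x1 P unfolding rays_upto_def maxnorm_def by auto
  moreover have "int h - fst w < fst x" using x1 w by simp
  ultimately show ?thesis using dx by blast
qed

lemma pivot_nbr:
  assumes "w \<in> pivots h M" "M \<ge> 4" "\<bar>\<sigma>\<bar> = 1"
  shows "pivot_nbr h w \<sigma> \<in> rays_upto h" "det2 (pivot_nbr h w \<sigma>) w = \<sigma>"
    "fst (pivot_nbr h w \<sigma>) > int h - fst w"
  using someI_ex[OF pivot_nbr_exists[OF assms]] unfolding pivot_nbr_def by auto

lemma det2_pivot_nbrs:
  assumes "w \<in> pivots h M" "M \<ge> 4"
  shows "det2 (pivot_nbr h w 1) (pivot_nbr h w (-1)) \<ge> 2 * M - 1"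
proof -
  define u v where "u = pivot_nbr h w 1" and "v = pivot_nbr h w (-1)"
  note U = pivot_nbr[OF assms, of 1, folded u_def] and V = pivot_nbr[OF assms, of "-1", folded v_def]
  have "(2 * M - 2) * fst w \<le> 2 * (int h - fst w)"
    using assms unfolding pivots_def by (simp add: algebra_simps)
  also have "\<dots> < fst u + fst v" using U(3) V(3) by simp
  also have "\<dots> = det2 u v * fst w"
    using det2_cramer_fst[of u w v] U(2) V(2) by simp
  finally have "(2 * M - 2) * fst w < det2 u v * fst w" .
  then show ?thesis
    unfolding u_def v_def using pivotsD(2)[OF assms] mult_right_less_imp_less by fastforce
qed

lemma between_pivot_nbrs:
  assumes "w \<in> pivots h M" "M \<ge> 4" and z: "z \<in> rays_upto h"
    "det2 (pivot_nbr h w 1) z > 0" "det2 z (pivot_nbr h w (-1)) > 0"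
  shows "z = w"
proof -
  define u v where "u = pivot_nbr h w 1" and "v = pivot_nbr h w (-1)"
  note U = pivot_nbr[OF assms(1,2), of 1, folded u_def]
    and V = pivot_nbr[OF assms(1,2), of "-1", folded v_def]
  note P = pivotsD[OF assms(1,2)]
  have "fst z \<le> int h" using rays_upto_abs_le(1)[OF z(1)] by simp
  \<comment> \<open>unless z is a multiple of w, its coordinates in the basis (u, w) or in (w, v) are both
    positive, forcing fst z > h\<close>
  have fst_z: "fst z = det2 z w * fst u + det2 u z * fst w" "fst z = det2 z v * fst w - det2 z w * fst v"
    using det2_cramer_fst[of u w z] det2_cramer_fst[of w v z] U(2) V(2) det2_swap[of w z]
      det2_swap[of v w] by simp_all
  consider "det2 z w \<ge> 1" | "det2 z w = 0" | "det2 z w \<le> -1" by linarith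
  then show ?thesis
  proof cases
    case 1
    have "det2 z w * fst u \<ge> 1 * fst u" "det2 u z * fst w \<ge> 1 * fst w"
      using 1 z(2) U(3) P(2,3) unfolding u_def by (intro mult_right_mono; simp)+
    then have "fst z \<ge> fst u + fst w" using fst_z(1) by simp
    then show ?thesis using \<open>fst z \<le> int h\<close> U(3) by linarith
  next
    case 2
    then have z_eq: "fst z = det2 u z * fst w" "snd z = det2 u z * snd w"
      using det2_cramer_fst[of u w z] det2_cramer_snd[of u w z] U(2) by simp_all
    then have "is_unit (det2 u z)"
      using z(1) unfolding rays_upto_def by (intro primitive_common_divisor[of z]) simp_all
    then show ?thesis using z(2) z_eq unfolding u_def by (simp add: prod_eq_iff)
  next
    case 3
    have "- det2 z w * fst v \<ge> 1 * fst v" "det2 z v * fst w \<ge> 1 * fst w"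
      using 3 z(3) V(3) P(2,3) unfolding v_def by (intro mult_right_mono; simp)+
    then have "fst z \<ge> fst v + fst w" using fst_z(2) by simp
    then show ?thesis using \<open>fst z \<le> int h\<close> V(3) by linarith
  qed
qed

lemma pivot_eq_if_unimodular_to_same_ray:
  assumes "w \<in> pivots h M" "w' \<in> pivots h M" "M \<ge> 4"
    and "\<bar>det2 x w\<bar> = 1" "\<bar>det2 x w'\<bar> = 1" "fst x > int h - fst w"
  shows "w' = w"
proof -
  note P = pivotsD[OF assms(1,3)] and P' = pivotsD[OF assms(2,3)]
  have fst_w': "det2 x w * fst w' = det2 w' w * fst x + det2 x w' * fst w"
    and snd_w': "det2 x w * snd w' = det2 w' w * snd x + det2 x w' * snd w"
    by (rule det2_cramer_fst, rule det2_cramer_snd)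
  show ?thesis
  proof (cases "det2 w' w = 0")
    case True
    \<comment> \<open>both first coordinates are positive, so the two unimodular determinants agree\<close>
    then have "det2 x w = det2 x w'"
      using fst_w' assms(4,5) P(2) P'(2) by (auto simp: abs_if split: if_splits)
    then show ?thesis using True fst_w' snd_w' assms(4) by (auto simp: prod_eq_iff)
  next
    case False
    have "fst x = 1 * fst x" by simp
    also have "\<dots> \<le> \<bar>det2 w' w\<bar> * fst x"
      using False P(3) assms(6) by (intro mult_right_mono) auto
    also have "\<dots> = \<bar>det2 x w * fst w' - det2 x w' * fst w\<bar>"
      using P(3) assms(6) by (simp add: fst_w' abs_mult)
    also have "\<dots> \<le> fst w' + fst w"
      using assms(4,5) P(2) P'(2) by (simp add: abs_mult order.trans[OF abs_triangle_ineq4])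
    finally show ?thesis using assms(6) P(3) P'(2,3) by linarith
  qed
qed

definition pivot_triple :: "nat \<Rightarrow> int \<times> int \<Rightarrow> (int \<times> int) set" where
  "pivot_triple h w = {pivot_nbr h w 1, w, pivot_nbr h w (-1)}"

lemma pivot_nbrs_distinct:
  assumes "w \<in> pivots h M" "M \<ge> 4"
  shows "pivot_nbr h w 1 \<noteq> w" "pivot_nbr h w (-1) \<noteq> w" "pivot_nbr h w 1 \<noteq> pivot_nbr h w (-1)"
  using pivot_nbr(2)[OF assms, of 1] pivot_nbr(2)[OF assms, of "-1"] by (auto simp: det2_def)

lemma pivot_triple_subset: "w \<in> pivots h M \<Longrightarrow> M \<ge> 4 \<Longrightarrow> pivot_triple h w \<subseteq> rays_upto h"
  using pivot_nbr(1) pivotsD(1) unfolding pivot_triple_def by auto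

lemma pivot_triple_disjoint:
  assumes "w \<in> pivots h M" "w' \<in> pivots h M" "M \<ge> 4" "w \<noteq> w'"
  shows "pivot_triple h w \<inter> pivot_triple h w' = {}"
proof -
  have near: "x = w \<or> \<bar>det2 x w\<bar> = 1 \<and> fst x > int h - fst w"
    if "x \<in> pivot_triple h w" "w \<in> pivots h M" for x w
    using that pivot_nbr[OF that(2) assms(3), of 1] pivot_nbr[OF that(2) assms(3), of "-1"]
    unfolding pivot_triple_def by auto
  show ?thesis
  proof (intro equalityI subsetI)
    fix x assume "x \<in> pivot_triple h w \<inter> pivot_triple h w'"
    then have "x = w \<or> \<bar>det2 x w\<bar> = 1 \<and> fst x > int h - fst w"
      "x = w' \<or> \<bar>det2 x w'\<bar> = 1 \<and> fst x > int h - fst w'"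
      using near assms(1,2) by auto
    then show "x \<in> {}"
      using assms(4) pivot_eq_if_unimodular_to_same_ray[OF assms(1-3), of x]
        not_pivot_if_fst_large[OF assms(1,2,3), of x] not_pivot_if_fst_large[OF assms(2,1,3), of x]
      by blast
  qed simp
qed

lemma has_sing_index_ge_if_pivot_gap:
  assumes "w \<in> pivots h M" "M \<ge> 4" "int k \<le> 2 * M - 1" "S \<subseteq> rays_upto h"
    and "pivot_nbr h w 1 \<in> S" "pivot_nbr h w (-1) \<in> S" "w \<notin> S"
  shows "has_sing_index_ge S k"
proof -
  have "\<not> (\<exists>z\<in>S. det2 (pivot_nbr h w 1) z > 0 \<and> det2 z (pivot_nbr h w (-1)) > 0)"
    using between_pivot_nbrs[OF assms(1,2)] assms(4,7) by blast
  moreover have "det2 (pivot_nbr h w 1) (pivot_nbr h w (-1)) \<ge> 2 * M - 1"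
    by (rule det2_pivot_nbrs[OF assms(1,2)])
  ultimately show ?thesis
    using assms(2,3,5,6) unfolding has_sing_index_ge_def cone2_def sing_index_def
    by (intro exI[of _ "pivot_nbr h w 1"] exI[of _ "pivot_nbr h w (-1)"]) auto
qed

lemma not_smooth_fan_if_has_sing_index_ge: "has_sing_index_ge S k \<Longrightarrow> k \<ge> 2 \<Longrightarrow> \<not> smooth_fan S"
  unfolding has_sing_index_ge_def smooth_fan_def by fastforce

section \<open>Counting pivots\<close>

lemma sum_inverse_squares_from_2_le: "n \<ge> 2 \<Longrightarrow> (\<Sum>d=2..n. 1 / (real d)^2) \<le> 3/4 - 1 / real n"
proof (induction n rule: nat_induct_at_least)
  case base
  then show ?case by simp
next
  case (Suc n)
  have "1 / (real (Suc n))^2 \<le> 1 / (real n * real (Suc n))"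
    using Suc.hyps by (intro divide_left_mono) (auto simp: power2_eq_square intro!: mult_right_mono)
  also have "\<dots> = 1 / real n - 1 / real (Suc n)" using Suc.hyps by (simp add: field_simps)
  finally show ?case using Suc by simp
qed

lemma sum_inverse_squares_from_2_le_3_4: "(\<Sum>d=2..n. 1 / (real d)^2) \<le> 3/4"
proof (cases "n \<ge> 2")
  case True
  have "1 / real n \<ge> 0" by simp
  then show ?thesis using sum_inverse_squares_from_2_le[OF True] by linarith
qed simp

definition coprime_pairs :: "nat \<Rightarrow> (nat \<times> nat) set" where
  "coprime_pairs H = {p \<in> {1..H} \<times> {1..H}. coprime (fst p) (snd p)}"

lemma non_coprime_pairs_subset:
  "{1..H} \<times> {1..H} - coprime_pairs H \<subseteq>
     (\<Union>d\<in>{2..H}. (\<lambda>(x, y). (d * x, d * y)) ` ({1..H div d} \<times> {1..H div d}))"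
proof
  fix z assume z: "z \<in> {1..H} \<times> {1..H} - coprime_pairs H"
  obtain a b where ab: "z = (a, b)" by (cases z)
  have a: "1 \<le> a" "a \<le> H" and b: "1 \<le> b" "b \<le> H" and nc: "\<not> coprime a b"
    using z unfolding ab coprime_pairs_def by auto
  define g where "g = gcd a b"
  obtain x y where xy: "a = g * x" "b = g * y" unfolding g_def by (meson gcd_dvd1 gcd_dvd2 dvdE)
  have "g \<noteq> 1" using nc unfolding g_def by (simp add: coprime_iff_gcd_eq_1)
  moreover have "0 < g" "g \<le> a" using a gcd_le1_nat[of a b] unfolding g_def by simp_all
  ultimately have g: "g \<in> {2..H}" using a by auto
  have "x \<le> H div g" "y \<le> H div g"
    using xy a b g by (simp_all add: less_eq_div_iff_mult_less_eq mult.commute)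
  moreover have "x \<noteq> 0" "y \<noteq> 0" using xy a b by auto
  ultimately have "x \<in> {1..H div g}" "y \<in> {1..H div g}" by auto
  then have "z \<in> (\<lambda>(x, y). (g * x, g * y)) ` ({1..H div g} \<times> {1..H div g})"
    using xy ab by (intro rev_image_eqI[of "(x, y)"]) auto
  then show "z \<in> (\<Union>d\<in>{2..H}. (\<lambda>(x, y). (d * x, d * y)) ` ({1..H div d} \<times> {1..H div d}))"
    using g by blast
qed

lemma card_coprime_pairs_ge: "real (card (coprime_pairs H)) \<ge> (real H)^2 / 4"
proof -
  define Sq where "Sq = {1..H} \<times> {1..H}"
  have sub: "coprime_pairs H \<subseteq> Sq" unfolding coprime_pairs_def Sq_def by auto
  have "card (Sq - coprime_pairs H) \<le>
      card (\<Union>d\<in>{2..H}. (\<lambda>(x, y). (d * x, d * y)) ` ({1..H div d} \<times> {1..H div d}))"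
    using non_coprime_pairs_subset unfolding Sq_def by (rule card_mono[rotated]) simp
  also have "\<dots> \<le> (\<Sum>d\<in>{2..H}. card ((\<lambda>(x, y). (d * x, d * y)) ` ({1..H div d} \<times> {1..H div d})))"
    by (rule card_UN_le) simp
  also have "\<dots> \<le> (\<Sum>d\<in>{2..H}. card ({1..H div d} \<times> {1..H div d}))"
    by (intro sum_mono card_image_le) simp
  finally have "card (Sq - coprime_pairs H) \<le> (\<Sum>d\<in>{2..H}. (H div d) * (H div d))" by simp
  then have "real (card (Sq - coprime_pairs H)) \<le> (\<Sum>d\<in>{2..H}. (real (H div d))^2)"
    by (simp add: power2_eq_square flip: of_nat_mult of_nat_sum)
  also have "\<dots> \<le> (\<Sum>d\<in>{2..H}. (real H)^2 * (1 / (real d)^2))"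
  proof (rule sum_mono)
    fix d assume d: "d \<in> {2..H}"
    have "(real (H div d))^2 \<le> (real H / real d)^2" by (intro power_mono of_nat_div_le_of_nat) auto
    then show "(real (H div d))^2 \<le> (real H)^2 * (1 / (real d)^2)" by (simp add: power_divide)
  qed
  also have "\<dots> = (real H)^2 * (\<Sum>d\<in>{2..H}. 1 / (real d)^2)" by (simp add: sum_distrib_left)
  also have "\<dots> \<le> (real H)^2 * (3/4)"
    by (intro mult_left_mono sum_inverse_squares_from_2_le_3_4) simp
  finally have "real (card (Sq - coprime_pairs H)) \<le> 3/4 * (real H)^2" by simp
  moreover have "card Sq = card (coprime_pairs H) + card (Sq - coprime_pairs H)"
    using card_Diff_subset[OF finite_subset[OF sub] sub] card_mono[OF _ sub] unfolding Sq_def by simp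
  moreover have "card Sq = H^2" unfolding Sq_def by (simp add: power2_eq_square)
  ultimately have "(real H)^2 = real (card (coprime_pairs H)) + real (card (Sq - coprime_pairs H))"
    by (metis of_nat_add of_nat_power)
  with \<open>real (card (Sq - coprime_pairs H)) \<le> 3/4 * (real H)^2\<close> show ?thesis by simp
qed

lemma card_coprime_pairs_below_diagonal_ge:
  "real (card {p \<in> coprime_pairs H. snd p < fst p}) \<ge> (real H)^2 / 8 - 1/2"
proof -
  define lt where "lt = {p \<in> coprime_pairs H. snd p < fst p}"
  define gt where "gt = {p \<in> coprime_pairs H. fst p < snd p}"
  have fin: "finite (coprime_pairs H)" unfolding coprime_pairs_def by simp
  have "fst p \<noteq> snd p" if "p \<in> coprime_pairs H" "p \<noteq> (1, 1)" for p
    using that unfolding coprime_pairs_def by (cases p) auto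
  then have "coprime_pairs H \<subseteq> lt \<union> gt \<union> {(1, 1)}"
    unfolding lt_def gt_def by fastforce
  then have "card (coprime_pairs H) \<le> card (lt \<union> gt \<union> {(1, 1)})"
    by (rule card_mono[rotated]) (simp add: lt_def gt_def fin)
  also have "\<dots> \<le> card (lt \<union> gt) + card {(1::nat, 1::nat)}" by (rule card_Un_le)
  also have "\<dots> \<le> card lt + card gt + 1" using card_Un_le[of lt gt] by simp
  finally have "card (coprime_pairs H) \<le> card lt + card gt + 1" .
  moreover have "gt = prod.swap ` lt"
    unfolding lt_def gt_def coprime_pairs_def by (auto simp: image_iff ac_simps)
  then have "card gt = card lt" by (simp add: card_image)
  ultimately have "real (card (coprime_pairs H)) \<le> 2 * real (card lt) + 1" by linarith
  then show ?thesis using card_coprime_pairs_ge[of H] unfolding lt_def by linarith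
qed

lemma card_pivots_ge:
  assumes "M > 0"
  shows "real (card (pivots h M)) \<ge> (real (nat (int h div M)))^2 / 8 - 1/2"
proof -
  define H where "H = nat (int h div M)"
  define lt where "lt = {p \<in> coprime_pairs H. snd p < fst p}"
  have "(\<lambda>(a, b). (int a, int b)) ` lt \<subseteq> pivots h M"
  proof safe
    fix a b assume ab: "(a, b) \<in> lt"
    then have a: "1 \<le> a" "a \<le> H" "b < a" "coprime a b" unfolding lt_def coprime_pairs_def by auto
    have "int h div M \<ge> 0" using assms by (simp add: pos_imp_zdiv_nonneg_iff)
    then have "M * int a \<le> M * (int h div M)"
      using a(2) assms unfolding H_def by (intro mult_left_mono) auto
    also have "\<dots> = int h - int h mod M" by (simp add: minus_mod_eq_mult_div)
    also have "\<dots> \<le> int h" using assms by simp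
    finally have Ma: "M * int a \<le> int h" .
    moreover have "int a \<le> M * int a" using assms a by simp
    ultimately have "a \<le> h" "b \<le> h" using a by linarith+
    moreover have "primitive (int a, int b)" unfolding primitive_def using a(4) by (simp add: coprime_iff_gcd_eq_1)
    ultimately show "(int a, int b) \<in> pivots h M"
      using a Ma unfolding pivots_def rays_upto_def maxnorm_def by auto
  qed
  moreover have "finite (pivots h M)"
    using finite_rays_upto[of h] unfolding pivots_def by simp
  ultimately have "card ((\<lambda>(a, b). (int a, int b)) ` lt) \<le> card (pivots h M)"
    by (rule card_mono[rotated])
  moreover have "inj_on (\<lambda>(a, b). (int a, int b)) lt" by (auto simp: inj_on_def)
  ultimately have "card lt \<le> card (pivots h M)" by (simp add: card_image)
  then show ?thesis using card_coprime_pairs_below_diagonal_ge[of H] unfolding H_def lt_def by linarith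
qed

lemma real_nat_div_ge:
  assumes "M \<ge> 1"
  shows "real (nat (int h div M)) \<ge> real h / real_of_int M - 1"
proof -
  have "int h = M * (int h div M) + int h mod M" by simp
  moreover have "int h mod M < M" using assms by simp
  ultimately have "int h < M * (int h div M) + M" by linarith
  then have "real h < real_of_int M * real_of_int (int h div M) + real_of_int M"
    by (metis of_int_add of_int_less_iff of_int_mult of_int_of_nat_eq)
  then show ?thesis using assms by (simp add: field_simps pos_imp_zdiv_nonneg_iff)
qed

lemma eventually_card_pivots_ge:
  assumes "M \<ge> 1"
  shows "eventually (\<lambda>h. real (card (pivots h M)) \<ge> real h ^ 2 / (64 * (real_of_int M)^2)) sequentially"
proof -
  define m where "m = real_of_int M"
  have m: "m \<ge> 1" using assms unfolding m_def by simp
  have "eventually (\<lambda>h. real h \<ge> 2 * m + 8 * m^2) sequentially"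
    by (rule eventually_sequentiallyI[of "nat \<lceil>2 * m + 8 * m^2\<rceil>"]) linarith
  then show ?thesis
  proof eventually_elim
    case (elim h)
    have "real (nat (int h div M)) \<ge> real h / m - 1"
      using real_nat_div_ge[OF assms] unfolding m_def .
    also have "real h / m - 1 \<ge> real h / (2 * m)"
    proof -
      have "real h \<ge> 2 * m" using elim zero_le_power2[of m] by linarith
      then show ?thesis using m by (simp add: field_simps)
    qed
    finally have "(real (nat (int h div M)))^2 \<ge> (real h / (2 * m))^2"
      using m by (intro power_mono) auto
    moreover have "(real h / (2 * m))^2 = 16 * (real h ^ 2 / (64 * m^2))"
      by (simp add: power_divide power_mult_distrib)
    moreover have "real h ^ 2 / (64 * m^2) \<ge> 1"
    proof -
      have "1 \<le> m^2" using m by (simp add: one_le_power)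
      then have "8 * m^2 \<le> real h" "1 \<le> 8 * m^2" using elim m by linarith+
      then have "(8 * m^2)^2 \<le> (real h)^2" by (intro power_mono) auto
      moreover have "64 * m^2 * 1 \<le> 64 * m^2 * m^2" using \<open>1 \<le> m^2\<close> by (intro mult_left_mono) auto
      then have "64 * m^2 \<le> (8 * m^2)^2" by (simp add: power2_eq_square)
      ultimately show ?thesis using m by simp
    qed
    ultimately have "real (card (pivots h M)) \<ge> real h ^ 2 / (64 * m^2)"
      using card_pivots_ge[of M h] assms by linarith
    then show ?case unfolding m_def .
  qed
qed

section \<open>Independent coin flips\<close>

lemma measure_pmf_prob_pair_Times:
  "measure_pmf.prob (pair_pmf M N) (A \<times> B) = measure_pmf.prob M A * measure_pmf.prob N B"
proof -
  have "measure_pmf.prob (pair_pmf M N) (A \<times> B) =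
        measure_pmf.prob (pair_pmf M N) ((A \<inter> set_pmf M) \<times> (B \<inter> set_pmf N))"
    by (subst measure_Int_set_pmf[symmetric]) (simp add: Times_Int_Times Int_ac)
  also have "\<dots> = measure_pmf.prob M (A \<inter> set_pmf M) * measure_pmf.prob N (B \<inter> set_pmf N)"
    by (rule measure_pmf_prob_product) auto
  finally show ?thesis by (simp add: measure_Int_set_pmf)
qed

lemma prob_Pi_pmf_local:
  assumes "finite A" "D \<subseteq> B" "B \<subseteq> A"
    and local: "\<And>f g. (\<forall>x\<in>D. f x = g x) \<Longrightarrow> Q f = Q g"
  shows "measure_pmf.prob (Pi_pmf B dflt p) {f. Q f} = measure_pmf.prob (Pi_pmf A dflt p) {f. Q f}"
proof -
  have "Q (\<lambda>x. if x \<in> B then f x else dflt) = Q f" for f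
    by (rule local) (use assms(2) in auto)
  then have "(\<lambda>f x. if x \<in> B then f x else dflt) -` {f. Q f} = {f. Q f}" by auto
  then show ?thesis by (simp add: Pi_pmf_subset[OF assms(1,3)])
qed

lemma prob_Pi_pmf_independent_blocks:
  fixes D :: "'i \<Rightarrow> 'a set" and Q :: "'i \<Rightarrow> ('a \<Rightarrow> 'b) \<Rightarrow> bool"
  assumes "finite I" "finite A" "\<forall>i\<in>I. D i \<subseteq> A" "disjoint_family_on D I"
    "\<forall>i\<in>I. \<forall>f g. (\<forall>x\<in>D i. f x = g x) \<longrightarrow> Q i f = Q i g"
  shows "measure_pmf.prob (Pi_pmf A dflt p) {f. \<forall>i\<in>I. Q i f} =
    (\<Prod>i\<in>I. measure_pmf.prob (Pi_pmf A dflt p) {f. Q i f})"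
  using assms(1) assms(2-5)
proof (induction I arbitrary: A rule: finite_induct)
  case empty
  then show ?case by simp
next
  case (insert j I A)
  define glue where "glue = (\<lambda>(f::'a\<Rightarrow>'b, g::'a\<Rightarrow>'b) x. if x \<in> D j then f x else g x)"
  have Dj: "D j \<subseteq> A" "finite (D j)" using insert.prems finite_subset by auto
  have DI: "\<forall>i\<in>I. D i \<subseteq> A - D j"
    using insert.prems(2,3) insert.hyps(2) unfolding disjoint_family_on_def by fastforce
  have local_j: "\<And>f g. (\<forall>x\<in>D j. f x = g x) \<Longrightarrow> Q j f = Q j g"
    and local_I: "\<And>i f g. i \<in> I \<Longrightarrow> (\<forall>x\<in>D i. f x = g x) \<Longrightarrow> Q i f = Q i g"
    using insert.prems(4) by blast+
  have "Pi_pmf A dflt p = map_pmf glue (pair_pmf (Pi_pmf (D j) dflt p) (Pi_pmf (A - D j) dflt p))"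
    using Pi_pmf_union[of "D j" "A - D j" dflt p] Dj insert.prems(1)
    by (simp add: glue_def Un_absorb1 Diff_partition)
  moreover have "glue -` {f. \<forall>i\<in>insert j I. Q i f} = {f. Q j f} \<times> {g. \<forall>i\<in>I. Q i g}"
  proof -
    have "Q j (glue (f, g)) = Q j f" for f g by (rule local_j) (simp add: glue_def)
    moreover have "Q i (glue (f, g)) = Q i g" if "i \<in> I" for i f g
      by (rule local_I[OF that]) (use DI that in \<open>auto simp: glue_def\<close>)
    ultimately show ?thesis by auto
  qed
  ultimately have "measure_pmf.prob (Pi_pmf A dflt p) {f. \<forall>i\<in>insert j I. Q i f} =
      measure_pmf.prob (Pi_pmf (D j) dflt p) {f. Q j f} *
      measure_pmf.prob (Pi_pmf (A - D j) dflt p) {g. \<forall>i\<in>I. Q i g}"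
    by (simp add: measure_pmf_prob_pair_Times)
  also have "measure_pmf.prob (Pi_pmf (A - D j) dflt p) {g. \<forall>i\<in>I. Q i g} =
      (\<Prod>i\<in>I. measure_pmf.prob (Pi_pmf (A - D j) dflt p) {f. Q i f})"
    using insert.prems DI by (intro insert.IH) (auto simp: disjoint_family_on_def)
  also have "\<dots> = (\<Prod>i\<in>I. measure_pmf.prob (Pi_pmf A dflt p) {f. Q i f})"
    using DI insert.prems(1) by (intro prod.cong refl prob_Pi_pmf_local local_I) auto
  also have "measure_pmf.prob (Pi_pmf (D j) dflt p) {f. Q j f} = measure_pmf.prob (Pi_pmf A dflt p) {f. Q j f}"
    using Dj insert.prems(1) by (intro prob_Pi_pmf_local local_j) auto
  finally show ?case using insert.hyps by simp
qed

lemma prob_Pi_pmf_bernoulli_prescribed: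
  assumes "finite R" "X \<subseteq> R" "0 \<le> p" "p \<le> 1"
  shows "measure_pmf.prob (Pi_pmf R False (\<lambda>_. bernoulli_pmf p)) {f. \<forall>x\<in>X. f x = c x} =
         (\<Prod>x\<in>X. if c x then p else 1 - p)"
proof -
  define B where "B = (\<lambda>x. if x \<in> X then {c x} else (UNIV :: bool set))"
  have "{f. \<forall>x\<in>X. f x = c x} = Pi R B" unfolding B_def Pi_def using assms(2) by auto
  then have "measure_pmf.prob (Pi_pmf R False (\<lambda>_. bernoulli_pmf p)) {f. \<forall>x\<in>X. f x = c x} =
      (\<Prod>x\<in>R. measure_pmf.prob (bernoulli_pmf p) (B x))"
    using measure_Pi_pmf_Pi[OF assms(1)] by simp
  also have "\<dots> = (\<Prod>x\<in>X. measure_pmf.prob (bernoulli_pmf p) (B x))"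
    by (rule prod.mono_neutral_right[OF assms(1,2)]) (auto simp: B_def)
  also have "\<dots> = (\<Prod>x\<in>X. if c x then p else 1 - p)"
    using assms(3,4) by (intro prod.cong refl) (auto simp: B_def measure_pmf_single)
  finally show ?thesis .
qed

lemma one_minus_power_le_exp: "0 \<le> p \<Longrightarrow> p \<le> 1 \<Longrightarrow> (1 - p) ^ n \<le> exp (- p * real n)"
  using power_mono[of "1 - p" "exp (- p)" n] exp_ge_add_one_self[of "- p"]
  by (simp add: exp_of_nat_mult[symmetric] mult.commute)

section \<open>Probability bounds for the random fan\<close>

definition coin_flips :: "nat \<Rightarrow> real \<Rightarrow> ((int \<times> int) \<Rightarrow> bool) pmf" where
  "coin_flips h p = Pi_pmf (rays_upto h) False (\<lambda>_. bernoulli_pmf p)"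

lemma prob_T_eq: "measure_pmf.prob (T h p) X = measure_pmf.prob (coin_flips h p) {f. {u \<in> rays_upto h. f u} \<in> X}"
  unfolding T_def coin_flips_def by (simp add: vimage_def)

lemma prob_coin_flips_prescribed:
  "X \<subseteq> rays_upto h \<Longrightarrow> 0 \<le> p \<Longrightarrow> p \<le> 1 \<Longrightarrow>
    measure_pmf.prob (coin_flips h p) {f. \<forall>x\<in>X. f x = c x} = (\<Prod>x\<in>X. if c x then p else 1 - p)"
  unfolding coin_flips_def by (rule prob_Pi_pmf_bernoulli_prescribed[OF finite_rays_upto])

lemma prob_coin_flips_le_prob_T:
  "(\<And>f. P f \<Longrightarrow> {u \<in> rays_upto h. f u} \<in> X) \<Longrightarrow>
    measure_pmf.prob (coin_flips h p) {f. P f} \<le> measure_pmf.prob (T h p) X"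
  unfolding prob_T_eq by (intro measure_pmf.finite_measure_mono) auto

lemma prob_smooth_ge_none_chosen:
  assumes "0 \<le> p" "p \<le> 1"
  shows "measure_pmf.prob (T h p) {S. smooth_fan S} \<ge> 1 - real (card (rays_upto h)) * p"
proof -
  have "1 - real (card (rays_upto h)) * p \<le> (1 - p) ^ card (rays_upto h)"
    using Bernoulli_inequality[of "- p" "card (rays_upto h)"] assms by simp
  also have "\<dots> = measure_pmf.prob (coin_flips h p) {f. \<forall>x\<in>rays_upto h. f x = False}"
    using prob_coin_flips_prescribed[OF order.refl assms, of h "\<lambda>_. False"] by simp
  also have "\<dots> \<le> measure_pmf.prob (T h p) {S. smooth_fan S}"
  proof (rule prob_coin_flips_le_prob_T)
    fix f assume "\<forall>x\<in>rays_upto h. f x = False"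
    then have none: "{u \<in> rays_upto h. f u} = {}" by auto
    show "{u \<in> rays_upto h. f u} \<in> {S. smooth_fan S}"
      unfolding mem_Collect_eq none by (simp add: smooth_fan_def cone2_def)
  qed
  finally show ?thesis .
qed

lemma prob_smooth_ge_all_chosen:
  assumes "0 \<le> p" "p \<le> 1"
  shows "measure_pmf.prob (T h p) {S. smooth_fan S} \<ge> 1 - real (card (rays_upto h)) * (1 - p)"
proof -
  have "1 - real (card (rays_upto h)) * (1 - p) \<le> p ^ card (rays_upto h)"
    using Bernoulli_inequality[of "- (1 - p)" "card (rays_upto h)"] assms by (simp add: algebra_simps)
  also have "\<dots> = measure_pmf.prob (coin_flips h p) {f. \<forall>x\<in>rays_upto h. f x = True}"
    using prob_coin_flips_prescribed[OF order.refl assms, of h "\<lambda>_. True"] by simp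
  also have "\<dots> \<le> measure_pmf.prob (T h p) {S. smooth_fan S}"
  proof (rule prob_coin_flips_le_prob_T)
    fix f assume "\<forall>x\<in>rays_upto h. f x = True"
    then have all: "{u \<in> rays_upto h. f u} = rays_upto h" by auto
    show "{u \<in> rays_upto h. f u} \<in> {S. smooth_fan S}"
      unfolding mem_Collect_eq all by (rule smooth_fan_rays_upto)
  qed
  finally show ?thesis .
qed

lemma measure_pmf_prob_Collect_not:
  "measure_pmf.prob M {x. \<not> P x} = 1 - measure_pmf.prob M {x. P x}"
proof -
  have "{x. \<not> P x} = UNIV - {x. P x}" by auto
  then show ?thesis using measure_pmf.prob_compl[of "{x. P x}" M] by simp
qed

lemma prob_no_pivot_gap:
  assumes "w \<in> pivots h M" "M \<ge> 4" "0 \<le> p" "p \<le> 1"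
  shows "measure_pmf.prob (coin_flips h p)
    {f. \<not> (f (pivot_nbr h w 1) \<and> f (pivot_nbr h w (-1)) \<and> \<not> f w)} = 1 - p^2 * (1 - p)"
proof -
  note distinct = pivot_nbrs_distinct[OF assms(1,2)]
  have "{f. f (pivot_nbr h w 1) \<and> f (pivot_nbr h w (-1)) \<and> \<not> f w} =
      {f. \<forall>x\<in>pivot_triple h w. f x = (x \<noteq> w)}"
    unfolding pivot_triple_def using distinct by auto
  then have "measure_pmf.prob (coin_flips h p) {f. f (pivot_nbr h w 1) \<and> f (pivot_nbr h w (-1)) \<and> \<not> f w} =
      (\<Prod>x\<in>pivot_triple h w. if x \<noteq> w then p else 1 - p)"
    using prob_coin_flips_prescribed[OF pivot_triple_subset[OF assms(1,2)] assms(3,4)] by simp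
  also have "\<dots> = p^2 * (1 - p)" unfolding pivot_triple_def using distinct by (simp add: power2_eq_square)
  finally show ?thesis unfolding measure_pmf_prob_Collect_not by simp
qed

lemma prob_has_sing_index_ge_ge:
  assumes "M \<ge> 4" "int k \<le> 2 * M - 1" "0 \<le> p" "p \<le> 1"
  shows "measure_pmf.prob (T h p) {S. has_sing_index_ge S k} \<ge>
    1 - exp (- (p^2 * (1 - p) * real (card (pivots h M))))"
proof -
  define no_gap where "no_gap = (\<lambda>w f. \<not> (f (pivot_nbr h w 1) \<and> f (pivot_nbr h w (-1)) \<and> \<not> f w))"
  have "finite (pivots h M)" using finite_rays_upto[of h] unfolding pivots_def by simp
  then have "measure_pmf.prob (coin_flips h p) {f. \<forall>w\<in>pivots h M. no_gap w f} =
      (\<Prod>w\<in>pivots h M. measure_pmf.prob (coin_flips h p) {f. no_gap w f})"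
    unfolding coin_flips_def
  proof (rule prob_Pi_pmf_independent_blocks[OF _ finite_rays_upto, where D = "pivot_triple h"])
    show "\<forall>w\<in>pivots h M. pivot_triple h w \<subseteq> rays_upto h" using pivot_triple_subset assms(1) by blast
    show "disjoint_family_on (pivot_triple h) (pivots h M)"
      using pivot_triple_disjoint assms(1) unfolding disjoint_family_on_def by blast
    show "\<forall>w\<in>pivots h M. \<forall>f g. (\<forall>x\<in>pivot_triple h w. f x = g x) \<longrightarrow> no_gap w f = no_gap w g"
      unfolding pivot_triple_def no_gap_def by simp
  qed
  also have "\<dots> = (1 - p^2 * (1 - p)) ^ card (pivots h M)"
    using prob_no_pivot_gap[OF _ assms(1,3,4)] unfolding no_gap_def by simp
  also have "\<dots> \<le> exp (- (p^2 * (1 - p) * real (card (pivots h M))))"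
    using one_minus_power_le_exp[of "p^2 * (1 - p)" "card (pivots h M)"] assms(3,4)
    by (simp add: mult_le_one power_le_one)
  finally have no_gap: "measure_pmf.prob (coin_flips h p) {f. \<forall>w\<in>pivots h M. no_gap w f} \<le>
    exp (- (p^2 * (1 - p) * real (card (pivots h M))))" .
  have "measure_pmf.prob (coin_flips h p) {f. \<not> (\<forall>w\<in>pivots h M. no_gap w f)} \<le>
      measure_pmf.prob (T h p) {S. has_sing_index_ge S k}"
  proof (rule prob_coin_flips_le_prob_T)
    fix f assume "\<not> (\<forall>w\<in>pivots h M. no_gap w f)"
    then obtain w where "w \<in> pivots h M" "f (pivot_nbr h w 1)" "f (pivot_nbr h w (-1))" "\<not> f w"
      unfolding no_gap_def by blast
    then show "{u \<in> rays_upto h. f u} \<in> {S. has_sing_index_ge S k}"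
      using has_sing_index_ge_if_pivot_gap[of w h M k "{u \<in> rays_upto h. f u}"] assms(1,2)
        pivot_nbr(1)[OF _ assms(1)] by auto
  qed
  with no_gap show ?thesis unfolding measure_pmf_prob_Collect_not by linarith
qed

lemma pivot_in_open_quadrant:
  "x \<in> pivots h M \<Longrightarrow> M \<ge> 4 \<Longrightarrow> x \<noteq> (1, 0) \<Longrightarrow> fst x > 0 \<and> snd x > 0"
  using pivotsD[of x h M] primitive_fst_eq_1_if_snd_eq_0[of x] unfolding rays_upto_def by fastforce

lemma smooth_fan_contains_axis_or_misses_pivots:
  assumes "finite S" "S \<subseteq> rays_upto h" "smooth_fan S" "M \<ge> 4"
  shows "(1, 0) \<in> S \<or> (\<forall>x\<in>pivots h M - {(1, 0)}. x \<notin> S) \<or>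
    (\<forall>x\<in>pivots h M - {(1, 0)}. (fst x, - snd x) \<notin> S)"
proof (rule ccontr)
  assume "\<not> ?thesis"
  then obtain x y where "(1, 0) \<notin> S" "x \<in> S" "(fst y, - snd y) \<in> S"
    and "x \<in> pivots h M - {(1, 0)}" "y \<in> pivots h M - {(1, 0)}" by blast
  moreover from this have "fst x > 0" "snd x > 0" "fst y > 0" "snd y > 0"
    using pivot_in_open_quadrant[of _ h M] assms(4) by auto
  moreover have "\<forall>z\<in>S. primitive z" using assms(2) unfolding rays_upto_def by auto
  ultimately show False
    using not_smooth_fan_if_rays_on_both_sides_of_x_axis[of S x "(fst y, - snd y)"] assms(1,3) by auto
qed

lemma prob_smooth_le_sparse:
  assumes "0 \<le> p" "p \<le> 1"
  shows "measure_pmf.prob (T h p) {S. smooth_fan S} \<le> p + 2 * exp (- p * (real (card (pivots h 4)) - 1))"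
proof -
  define X where "X = pivots h 4 - {(1, 0)}"
  define Y where "Y = (\<lambda>z. (fst z, - snd z)) ` X"
  have X: "X \<subseteq> rays_upto h" "finite X"
    using finite_rays_upto finite_subset unfolding X_def pivots_def by auto
  then have Y: "Y \<subseteq> rays_upto h"
    unfolding Y_def rays_upto_def primitive_def maxnorm_def by auto
  have card_Y: "card Y = card X" unfolding Y_def by (rule card_image) (auto simp: inj_on_def prod_eq_iff)
  have "card (pivots h 4) \<le> card (insert (1, 0) X)"
    using X by (intro card_mono) (auto simp: X_def)
  then have card_X: "real (card X) \<ge> real (card (pivots h 4)) - 1"
    using X by (simp add: card_insert_if split: if_splits)
  define E1 where "E1 = {f. (1, 0) \<in> rays_upto h \<and> f (1::int, 0::int)}"
  define E2 where "E2 = {f. \<forall>x\<in>X. f x = False}"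
  define E3 where "E3 = {f. \<forall>x\<in>Y. f x = False}"
  have "measure_pmf.prob (T h p) {S. smooth_fan S} \<le> measure_pmf.prob (coin_flips h p) (E1 \<union> E2 \<union> E3)"
    unfolding prob_T_eq
  proof (intro measure_pmf.finite_measure_mono subsetI)
    fix f assume "f \<in> {f. {u \<in> rays_upto h. f u} \<in> {S. smooth_fan S}}"
    then show "f \<in> E1 \<union> E2 \<union> E3"
      using smooth_fan_contains_axis_or_misses_pivots[of "{u \<in> rays_upto h. f u}" h 4] X Y finite_rays_upto[of h]
      unfolding E1_def E2_def E3_def X_def[symmetric] Y_def by auto
  qed simp
  also have "\<dots> \<le> measure_pmf.prob (coin_flips h p) E1 + measure_pmf.prob (coin_flips h p) E2 +
      measure_pmf.prob (coin_flips h p) E3"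
    using measure_Un_le[of E1 "measure_pmf (coin_flips h p)" E2]
      measure_Un_le[of "E1 \<union> E2" "measure_pmf (coin_flips h p)" E3] by simp
  also have "\<dots> \<le> p + exp (- p * real (card X)) + exp (- p * real (card X))"
  proof (intro add_mono)
    show "measure_pmf.prob (coin_flips h p) E1 \<le> p"
    proof (cases "(1::int, 0::int) \<in> rays_upto h")
      case True
      then have "E1 = {f. \<forall>x\<in>{(1, 0)}. f x = True}" unfolding E1_def by auto
      then show ?thesis using prob_coin_flips_prescribed[of "{(1, 0)}" h p "\<lambda>_. True"] True assms by simp
    qed (simp add: E1_def assms)
    show "measure_pmf.prob (coin_flips h p) E2 \<le> exp (- p * real (card X))"
      using prob_coin_flips_prescribed[OF X(1) assms, of "\<lambda>_. False"] one_minus_power_le_exp[OF assms]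
      unfolding E2_def by simp
    show "measure_pmf.prob (coin_flips h p) E3 \<le> exp (- p * real (card X))"
      using prob_coin_flips_prescribed[OF Y assms, of "\<lambda>_. False"] one_minus_power_le_exp[OF assms]
      unfolding E3_def by (simp add: card_Y)
  qed
  also have "\<dots> \<le> p + 2 * exp (- p * (real (card (pivots h 4)) - 1))"
    using card_X assms(1) by (simp add: mult_left_mono)
  finally show ?thesis .
qed
section \<open>Asymptotics\<close>

lemma filterlim_divide_at_top_if_succ:
  fixes f g :: "nat \<Rightarrow> real"
  assumes "succ f g" "\<And>h. 0 \<le> f h" "eventually (\<lambda>h. g h > 0) sequentially"
  shows "filterlim (\<lambda>h. f h / g h) at_top sequentially"
proof -
  have lim: "((\<lambda>h. g h / f h) \<longlongrightarrow> 0) sequentially" and "eventually (\<lambda>h. f h \<noteq> 0) sequentially"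
    using assms(1) unfolding succ_def prec_def by auto
  from this(2) have "eventually (\<lambda>h. g h / f h > 0) sequentially"
    using assms(3) by eventually_elim (use assms(2) in \<open>simp add: less_le\<close>)
  with lim have "filterlim (\<lambda>h. inverse (g h / f h)) at_top sequentially"
    by (rule filterlim_inverse_at_top)
  then show ?thesis by simp
qed

lemma filterlim_mult_power_at_top_if_succ:
  fixes f :: "nat \<Rightarrow> real"
  assumes "succ f (\<lambda>h. 1 / real h ^ n)" "\<And>h. 0 \<le> f h"
  shows "filterlim (\<lambda>h. f h * real h ^ n) at_top sequentially"
proof -
  have "eventually (\<lambda>h. 1 / real h ^ n > 0) sequentially"
    using eventually_gt_at_top[of 0] by eventually_elim simp
  from filterlim_divide_at_top_if_succ[OF assms this] show ?thesis by simp
qed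

lemma filterlim_at_top_if_ge_linear:
  fixes x y :: "'a \<Rightarrow> real"
  assumes "filterlim x at_top F" "c > 0" "eventually (\<lambda>t. y t \<ge> c * x t - d) F"
  shows "filterlim y at_top F"
  unfolding filterlim_at_top
proof
  fix Z
  have "eventually (\<lambda>t. x t \<ge> (Z + d) / c) F" using assms(1) by (simp add: filterlim_at_top)
  with assms(3) show "eventually (\<lambda>t. Z \<le> y t) F"
    by eventually_elim (use assms(2) in \<open>simp add: field_simps\<close>)
qed

lemma tendsto_exp_neg_at_top:
  fixes x :: "'a \<Rightarrow> real"
  assumes "filterlim x at_top F"
  shows "((\<lambda>t. exp (- x t)) \<longlongrightarrow> 0) F"
  using assms by (intro filterlim_compose[OF exp_at_bot]) (simp add: filterlim_uminus_at_bot)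

lemma tendsto_one_if_ge_one_minus:
  fixes P e :: "nat \<Rightarrow> real"
  assumes "\<And>h. P h \<le> 1" "eventually (\<lambda>h. P h \<ge> 1 - e h) sequentially" "(e \<longlongrightarrow> 0) sequentially"
  shows "(P \<longlongrightarrow> 1) sequentially"
proof (rule tendsto_sandwich[of "\<lambda>h. 1 - e h" _ _ "\<lambda>_. 1"])
  show "((\<lambda>h. 1 - e h) \<longlongrightarrow> 1) sequentially" using tendsto_diff[OF tendsto_const assms(3), of 1] by simp
qed (use assms in auto)

lemma card_rays_upto_le_9: "h \<ge> 1 \<Longrightarrow> real (card (rays_upto h)) \<le> 9 * real h ^ 2"
proof -
  assume "h \<ge> 1"
  then have "card (rays_upto h) \<le> (3 * h)^2"
    using card_rays_upto_le[of h] power_mono[of "2 * h + 1" "3 * h" 2] by linarith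
  then have "real (card (rays_upto h)) \<le> real ((3 * h)^2)" by (simp only: of_nat_le_iff)
  then show ?thesis by (simp add: power_mult_distrib)
qed

lemma tendsto_one_if_ge_one_minus_card_rays:
  fixes P r :: "nat \<Rightarrow> real"
  assumes "\<And>h. P h \<le> 1" "\<And>h. P h \<ge> 1 - real (card (rays_upto h)) * r h"
    "\<And>h. 0 \<le> r h" "prec r (\<lambda>h. 1 / real h ^ 2)"
  shows "(P \<longlongrightarrow> 1) sequentially"
proof (rule tendsto_one_if_ge_one_minus[OF assms(1)])
  show "eventually (\<lambda>h. P h \<ge> 1 - 9 * (r h * real h ^ 2)) sequentially"
    using eventually_ge_at_top[of 1]
  proof eventually_elim
    case (elim h)
    have "real (card (rays_upto h)) * r h \<le> 9 * real h ^ 2 * r h"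
      using card_rays_upto_le_9[OF elim] assms(3) by (rule mult_right_mono)
    then show ?case using assms(2)[of h] by (simp add: algebra_simps)
  qed
  have "((\<lambda>h. r h * real h ^ 2) \<longlongrightarrow> 0) sequentially"
    using assms(4) unfolding prec_def by simp
  then show "((\<lambda>h. 9 * (r h * real h ^ 2)) \<longlongrightarrow> 0) sequentially"
    using tendsto_mult_right_zero by blast
qed

lemma le_of_sparse_and_dense_bounds:
  fixes P p N \<epsilon> :: real
  assumes "0 \<le> p" "p \<le> 1" "0 \<le> N"
    and sparse: "P \<le> p + 2 * exp (- p * (N - 1))" and dense: "P \<le> exp (- (p ^ 2 * (1 - p) * N))"
    and "\<epsilon> > 0"
  shows "P \<le> \<epsilon> + (2 * exp (- (p * (N - 1))) + exp (- (\<epsilon>^2 * ((1 - p) * N))))"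
proof (cases "p \<le> \<epsilon>")
  case True
  have "0 \<le> exp (- (\<epsilon>^2 * ((1 - p) * N)))" "exp (- p * (N - 1)) = exp (- (p * (N - 1)))"
    by simp_all
  then show ?thesis using sparse True by linarith
next
  case False
  then have "\<epsilon>^2 \<le> p ^ 2" using \<open>\<epsilon> > 0\<close> by (intro power_mono) auto
  then have "\<epsilon>^2 * ((1 - p) * N) \<le> p ^ 2 * ((1 - p) * N)"
    using assms(2,3) by (intro mult_right_mono) auto
  then have "P \<le> exp (- (\<epsilon>^2 * ((1 - p) * N)))"
    using dense by (simp add: mult.assoc order.trans)
  moreover have "0 \<le> exp (- (p * (N - 1)))" by simp
  ultimately show ?thesis using \<open>\<epsilon> > 0\<close> by linarith
qed

lemma tendsto_zero_if_sparse_and_dense_bounds: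
  fixes P N p :: "nat \<Rightarrow> real"
  assumes "\<And>h. 0 \<le> P h" "\<And>h. 0 \<le> p h" "\<And>h. p h \<le> 1" "\<And>h. 0 \<le> N h"
    and sparse: "\<And>h. P h \<le> p h + 2 * exp (- p h * (N h - 1))"
    and dense: "\<And>h. P h \<le> exp (- (p h ^ 2 * (1 - p h) * N h))"
    and "filterlim (\<lambda>h. p h * N h) at_top sequentially"
    and "filterlim (\<lambda>h. (1 - p h) * N h) at_top sequentially"
  shows "(P \<longlongrightarrow> 0) sequentially"
proof (rule order_tendstoI)
  fix a :: real assume "a > 0"
  define \<epsilon> where "\<epsilon> = a / 2"
  have "\<epsilon> > 0" using \<open>a > 0\<close> unfolding \<epsilon>_def by simp
  have split: "P h \<le> \<epsilon> + (2 * exp (- (p h * (N h - 1))) + exp (- (\<epsilon>^2 * ((1 - p h) * N h))))" for h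
    using assms(2-4) sparse dense \<open>\<epsilon> > 0\<close> by (rule le_of_sparse_and_dense_bounds)
  have "filterlim (\<lambda>h. p h * (N h - 1)) at_top sequentially"
    by (rule filterlim_at_top_if_ge_linear[OF assms(7), where c = 1 and d = 1])
      (use assms(2,3) in \<open>auto simp: algebra_simps\<close>)
  moreover have "filterlim (\<lambda>h. \<epsilon>^2 * ((1 - p h) * N h)) at_top sequentially"
    by (rule filterlim_at_top_if_ge_linear[OF assms(8), where c = "\<epsilon>^2" and d = 0])
      (use \<open>\<epsilon> > 0\<close> in auto)
  ultimately have "((\<lambda>h. 2 * exp (- (p h * (N h - 1))) + exp (- (\<epsilon>^2 * ((1 - p h) * N h)))) \<longlongrightarrow> 2 * 0 + 0)
      sequentially"
    by (intro tendsto_intros tendsto_exp_neg_at_top)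
  then have "eventually (\<lambda>h. 2 * exp (- (p h * (N h - 1))) + exp (- (\<epsilon>^2 * ((1 - p h) * N h))) < \<epsilon>)
      sequentially"
    using \<open>\<epsilon> > 0\<close> by (intro order_tendstoD) simp_all
  then show "eventually (\<lambda>h. P h < a) sequentially"
  proof eventually_elim
    case (elim h)
    then show ?case using split[of h] unfolding \<epsilon>_def by linarith
  qed
qed (use assms(1) in \<open>auto intro: always_eventually less_le_trans\<close>)

lemma filterlim_sq_mult_complement_at_top:
  fixes p :: "nat \<Rightarrow> real"
  assumes "\<And>h. 0 \<le> p h" "\<And>h. p h \<le> 1"
    and "filterlim (\<lambda>h. p h * real h) at_top sequentially"
    and "filterlim (\<lambda>h. (1 - p h) * real h ^ 2) at_top sequentially"
  shows "filterlim (\<lambda>h. p h ^ 2 * (1 - p h) * real h ^ 2) at_top sequentially"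
  unfolding filterlim_at_top
proof
  fix Z :: real
  have "eventually (\<lambda>h. p h * real h \<ge> max 1 (2 * Z)) sequentially"
    "eventually (\<lambda>h. (1 - p h) * real h ^ 2 \<ge> 4 * Z) sequentially"
    using assms(3,4) unfolding filterlim_at_top by blast+
  then show "eventually (\<lambda>h. Z \<le> p h ^ 2 * (1 - p h) * real h ^ 2) sequentially"
  proof eventually_elim
    case (elim h)
    show ?case
    proof (cases "p h \<le> 1/2")
      case True
      have "(p h * real h)^2 \<ge> p h * real h"
        using elim(1) mult_left_mono[of 1 "p h * real h" "p h * real h"] by (simp add: power2_eq_square)
      then have "(p h * real h)^2 \<ge> 2 * Z" using elim(1) by linarith
      moreover have "p h ^ 2 * (1 - p h) * real h ^ 2 = (1 - p h) * (p h * real h)^2"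
        by (simp add: power_mult_distrib)
      moreover have "(1 - p h) * (p h * real h)^2 \<ge> 1/2 * (p h * real h)^2"
        using True by (intro mult_right_mono) auto
      ultimately show ?thesis by linarith
    next
      case False
      then have "p h ^ 2 \<ge> 1/4" using power_mono[of "1/2" "p h" 2] by (simp add: power2_eq_square)
      moreover have "(1 - p h) * real h ^ 2 \<ge> 0" using assms(2)[of h] by simp
      ultimately have "p h ^ 2 * ((1 - p h) * real h ^ 2) \<ge> 1/4 * ((1 - p h) * real h ^ 2)"
        by (intro mult_right_mono) auto
      then show ?thesis using elim(2) by (simp add: mult.assoc)
    qed
  qed
qed

lemma whp_smooth_if_prec:
  fixes q :: "nat \<Rightarrow> real"
  assumes q: "\<And>h. 0 \<le> q h \<and> q h \<le> 1"
    and "prec q (\<lambda>h. 1 / real h ^ 2) \<or> prec (\<lambda>h. 1 - q h) (\<lambda>h. 1 / real h ^ 2)"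
  shows "whp (\<lambda>h. measure_pmf.prob (T h (1 - q h)) {S. smooth_fan S})"
  using assms(2) unfolding whp_def
proof (elim disjE)
  assume "prec q (\<lambda>h. 1 / real h ^ 2)"
  moreover have "measure_pmf.prob (T h (1 - q h)) {S. smooth_fan S} \<ge> 1 - real (card (rays_upto h)) * q h" for h
    using prob_smooth_ge_all_chosen[of "1 - q h" h] q[of h] by simp
  ultimately show "((\<lambda>h. measure_pmf.prob (T h (1 - q h)) {S. smooth_fan S}) \<longlongrightarrow> 1) sequentially"
    using q by (intro tendsto_one_if_ge_one_minus_card_rays) auto
next
  assume "prec (\<lambda>h. 1 - q h) (\<lambda>h. 1 / real h ^ 2)"
  moreover have "measure_pmf.prob (T h (1 - q h)) {S. smooth_fan S} \<ge> 1 - real (card (rays_upto h)) * (1 - q h)" for h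
    using prob_smooth_ge_none_chosen[of "1 - q h" h] q[of h] by simp
  ultimately show "((\<lambda>h. measure_pmf.prob (T h (1 - q h)) {S. smooth_fan S}) \<longlongrightarrow> 1) sequentially"
    using q by (intro tendsto_one_if_ge_one_minus_card_rays) auto
qed

lemma filterlim_mult_card_pivots_at_top:
  fixes r :: "nat \<Rightarrow> real"
  assumes "M \<ge> 1" "\<And>h. 0 \<le> r h" "filterlim (\<lambda>h. r h * real h ^ 2) at_top sequentially"
  shows "filterlim (\<lambda>h. r h * real (card (pivots h M))) at_top sequentially"
proof (rule filterlim_at_top_if_ge_linear[OF assms(3), where c = "1 / (64 * (real_of_int M)^2)" and d = 0])
  show "eventually (\<lambda>h. r h * real (card (pivots h M)) \<ge> 1 / (64 * (real_of_int M)^2) * (r h * real h ^ 2) - 0)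
    sequentially"
    using eventually_card_pivots_ge[OF assms(1)]
    by eventually_elim (use assms(2) in \<open>auto dest: mult_left_mono[of _ _ "r _"]\<close>)
qed (use assms(1) in simp)

lemma prob_smooth_le_one_minus_has_sing_index_ge:
  "k \<ge> 2 \<Longrightarrow> measure_pmf.prob (T h p) {S. smooth_fan S} \<le> 1 - measure_pmf.prob (T h p) {S. has_sing_index_ge S k}"
proof -
  assume "k \<ge> 2"
  then have "{S. has_sing_index_ge S k} \<subseteq> {S. \<not> smooth_fan S}"
    using not_smooth_fan_if_has_sing_index_ge by blast
  then have "measure_pmf.prob (T h p) {S. has_sing_index_ge S k} \<le> measure_pmf.prob (T h p) {S. \<not> smooth_fan S}"
    by (rule measure_pmf.finite_measure_mono) simp
  then show ?thesis unfolding measure_pmf_prob_Collect_not by simp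
qed

lemma whp_not_smooth_if_succ:
  fixes q :: "nat \<Rightarrow> real"
  assumes q: "\<And>h. 0 \<le> q h \<and> q h \<le> 1"
    and "succ q (\<lambda>h. 1 / real h ^ 2)" "succ (\<lambda>h. 1 - q h) (\<lambda>h. 1 / real h ^ 2)"
  shows "whp (\<lambda>h. measure_pmf.prob (T h (1 - q h)) {S. \<not> smooth_fan S})"
proof -
  define P where "P h = measure_pmf.prob (T h (1 - q h)) {S. smooth_fan S}" for h
  define N where "N h = real (card (pivots h 4))" for h
  have "filterlim (\<lambda>h. q h * real h ^ 2) at_top sequentially"
    "filterlim (\<lambda>h. (1 - q h) * real h ^ 2) at_top sequentially"
    using assms q by (simp_all add: filterlim_mult_power_at_top_if_succ)
  then have "filterlim (\<lambda>h. (1 - q h) * N h) at_top sequentially"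
    "filterlim (\<lambda>h. (1 - (1 - q h)) * N h) at_top sequentially"
    using q unfolding N_def by (simp_all add: filterlim_mult_card_pivots_at_top)
  moreover have "P h \<le> 1 - q h + 2 * exp (- (1 - q h) * (N h - 1))" for h
    unfolding P_def N_def using prob_smooth_le_sparse[of "1 - q h" h] q[of h] by simp
  moreover have "P h \<le> exp (- ((1 - q h) ^ 2 * (1 - (1 - q h)) * N h))" for h
    using prob_smooth_le_one_minus_has_sing_index_ge[of 2 h "1 - q h"]
      prob_has_sing_index_ge_ge[of 4 2 "1 - q h" h] q[of h]
    unfolding P_def N_def by simp
  ultimately have "(P \<longlongrightarrow> 0) sequentially"
    using q by (intro tendsto_zero_if_sparse_and_dense_bounds[where p = "\<lambda>h. 1 - q h"])
      (simp_all add: P_def N_def)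
  then have "((\<lambda>h. 1 - P h) \<longlongrightarrow> 1 - 0) sequentially" by (intro tendsto_intros)
  then show ?thesis unfolding whp_def P_def by (simp add: measure_pmf_prob_Collect_not)
qed

lemma whp_has_sing_index_ge_if_succ:
  fixes q :: "nat \<Rightarrow> real"
  assumes q: "\<And>h. 0 \<le> q h \<and> q h \<le> 1"
    and "succ (\<lambda>h. 1 - q h) (\<lambda>h. 1 / real h)" "succ q (\<lambda>h. 1 / real h ^ 2)"
  shows "whp (\<lambda>h. measure_pmf.prob (T h (1 - q h)) {S. has_sing_index_ge S k})"
proof -
  define M where "M = int k + 4"
  have "filterlim (\<lambda>h. (1 - q h) * real h) at_top sequentially"
    using filterlim_mult_power_at_top_if_succ[of _ 1] assms q by simp
  moreover have "filterlim (\<lambda>h. (1 - (1 - q h)) * real h ^ 2) at_top sequentially"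
    using filterlim_mult_power_at_top_if_succ[of _ 2] assms q by simp
  ultimately have "filterlim (\<lambda>h. (1 - q h) ^ 2 * (1 - (1 - q h)) * real h ^ 2) at_top sequentially"
    using q by (intro filterlim_sq_mult_complement_at_top) auto
  then have "filterlim (\<lambda>h. (1 - q h) ^ 2 * (1 - (1 - q h)) * real (card (pivots h M))) at_top sequentially"
    using q unfolding M_def by (intro filterlim_mult_card_pivots_at_top) auto
  then show ?thesis
    unfolding whp_def
    using prob_has_sing_index_ge_ge[of M k "1 - q _"] q unfolding M_def
    by (intro tendsto_one_if_ge_one_minus[OF _ _ tendsto_exp_neg_at_top]) (auto intro: always_eventually)
qed

theorem theorem1:
  fixes q :: "nat \<Rightarrow> real"
  assumes q_range: "\<And>h. 0 \<le> q h \<and> q h \<le> 1"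
  shows
   "((prec q (\<lambda>h. 1 / real h ^ 2) \<or> prec (\<lambda>h. 1 - q h) (\<lambda>h. 1 / real h ^ 2)) \<longrightarrow>
       whp (\<lambda>h. measure_pmf.prob (T h (1 - q h)) {S. smooth_fan S}))
    \<and> ((succ q (\<lambda>h. 1 / real h ^ 2) \<and> succ (\<lambda>h. 1 - q h) (\<lambda>h. 1 / real h ^ 2)) \<longrightarrow>
       whp (\<lambda>h. measure_pmf.prob (T h (1 - q h)) {S. \<not> smooth_fan S}))
    \<and> (\<forall>k::nat. k > 1 \<longrightarrow>
        (succ (\<lambda>h. 1 - q h) (\<lambda>h. 1 / real h) \<and> succ q (\<lambda>h. 1 / real h ^ 2)) \<longrightarrow>
        whp (\<lambda>h. measure_pmf.prob (T h (1 - q h)) {S. has_sing_index_ge S k}))"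
proof (intro conjI impI allI)
  show "whp (\<lambda>h. measure_pmf.prob (T h (1 - q h)) {S. smooth_fan S})"
    if "prec q (\<lambda>h. 1 / real h ^ 2) \<or> prec (\<lambda>h. 1 - q h) (\<lambda>h. 1 / real h ^ 2)"
    using q_range that by (rule whp_smooth_if_prec)
  show "whp (\<lambda>h. measure_pmf.prob (T h (1 - q h)) {S. \<not> smooth_fan S})"
    if "succ q (\<lambda>h. 1 / real h ^ 2) \<and> succ (\<lambda>h. 1 - q h) (\<lambda>h. 1 / real h ^ 2)"
    using q_range that by (intro whp_not_smooth_if_succ) auto
  show "whp (\<lambda>h. measure_pmf.prob (T h (1 - q h)) {S. has_sing_index_ge S k})"
    if "succ (\<lambda>h. 1 - q h) (\<lambda>h. 1 / real h) \<and> succ q (\<lambda>h. 1 / real h ^ 2)" for k :: nat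
    using q_range that by (intro whp_has_sing_index_ge_if_succ) auto
qed

end
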